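(* Let $(X,b,m)$ be a connected weighted graph satisfying conditions (B) and (M), and let $D\subset X$ be non-empty. Then there exists a Voronoi decomposition of $X$ with centers from $D$. Moreover, whenever $R=\mathrm{Covr}(D)$ is finite, every Voronoi decomposition $(V_p)_{p\in D}$ of $X$ with centers from $D$ satisfies $V_p\subset B_R(p)$ for all $p\in D$.
   Context: A weighted graph $(X,b,m)$: $X$ countable, $b:X\times X\to[0,\infty)$ symmetric with $b(x,x)=0$ and $\sum_y b(x,y)<\infty$, $m:X\to(0,\infty)$. Condition (B): $\sup_x\frac{1}{m(x)}\sum_y b(x,y)<\infty$. Condition (M): $\sup_x m(x)<\infty$. A path from $x_0$ to $x_k$ is $\gamma=(x_0,\dots,x_k)$ with $b(x_j,x_{j+1})>0$, of length $L(\gamma)=\sum_{j=0}^{k-1}1/b(x_j,x_{j+1})$ (trivial paths have length $0$); it lies in a set $V$ if all $x_j\in V$. Connected means any two points are joined by a path; $d(x,y)$ is the infimum of lengths of paths from $x$ to $y$; $B_r(x):=\{y:d(x,y)\le r\}$. $\mathrm{Covr}(D):=\inf\{R>0:\bigcup_{p\in D}B_R(p)=X\}\in[0,\infty]$. A Voronoi decomposition of $X$ with centers from $D$ is a pairwise disjoint family $(V_p)_{p\in D}$ of subsets of $X$ such that: (V1) for each $p\in D$, $p\in V_p$, and for every $x\in V_p$ there is a path from $p$ to $x$ lying in $V_p$ with length $d(p,x)$; (V2) for each $p\in D$ and $x\in V_p$, $d(p,x)\le d(q,x)$ for all $q\in D$; (V3) $\bigcup_{p\in D}V_p=X$. *)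

theory Defs
  imports "HOL-Analysis.Analysis"
begin

definition weighted_graph :: "'a set \<Rightarrow> ('a \<Rightarrow> 'a \<Rightarrow> real) \<Rightarrow> ('a \<Rightarrow> real) \<Rightarrow> bool" where
  "weighted_graph X b m \<longleftrightarrow> countable X \<and>
     (\<forall>x\<in>X. \<forall>y\<in>X. 0 \<le> b x y \<and> b x y = b y x) \<and>
     (\<forall>x\<in>X. b x x = 0) \<and>
     (\<forall>x\<in>X. (b x) summable_on X) \<and>
     (\<forall>x\<in>X. 0 < m x)"

definition cond_B :: "'a set \<Rightarrow> ('a \<Rightarrow> 'a \<Rightarrow> real) \<Rightarrow> ('a \<Rightarrow> real) \<Rightarrow> bool" where
  "cond_B X b m \<longleftrightarrow> (\<exists>C. \<forall>x\<in>X. infsum (b x) X / m x \<le> C)"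

definition cond_M :: "'a set \<Rightarrow> ('a \<Rightarrow> real) \<Rightarrow> bool" where
  "cond_M X m \<longleftrightarrow> (\<exists>C. \<forall>x\<in>X. m x \<le> C)"

definition is_path :: "'a set \<Rightarrow> ('a \<Rightarrow> 'a \<Rightarrow> real) \<Rightarrow> 'a list \<Rightarrow> 'a \<Rightarrow> 'a \<Rightarrow> bool" where
  "is_path X b \<gamma> x y \<longleftrightarrow> \<gamma> \<noteq> [] \<and> hd \<gamma> = x \<and> last \<gamma> = y \<and> set \<gamma> \<subseteq> X \<and>
     (\<forall>j. Suc j < length \<gamma> \<longrightarrow> 0 < b (\<gamma> ! j) (\<gamma> ! Suc j))"

definition path_length :: "('a \<Rightarrow> 'a \<Rightarrow> real) \<Rightarrow> 'a list \<Rightarrow> real" where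
  "path_length b \<gamma> = (\<Sum>j<length \<gamma> - 1. 1 / b (\<gamma> ! j) (\<gamma> ! Suc j))"

definition graph_connected :: "'a set \<Rightarrow> ('a \<Rightarrow> 'a \<Rightarrow> real) \<Rightarrow> bool" where
  "graph_connected X b \<longleftrightarrow> (\<forall>x\<in>X. \<forall>y\<in>X. \<exists>\<gamma>. is_path X b \<gamma> x y)"

definition gdist :: "'a set \<Rightarrow> ('a \<Rightarrow> 'a \<Rightarrow> real) \<Rightarrow> 'a \<Rightarrow> 'a \<Rightarrow> real" where
  "gdist X b x y = Inf {path_length b \<gamma> | \<gamma>. is_path X b \<gamma> x y}"

definition gball :: "'a set \<Rightarrow> ('a \<Rightarrow> 'a \<Rightarrow> real) \<Rightarrow> 'a \<Rightarrow> real \<Rightarrow> 'a set" where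
  "gball X b x r = {y \<in> X. gdist X b x y \<le> r}"

text \<open>Covering radius, valued in [0,\<infinity>] (Inf of the empty set is \<infinity>).\<close>
definition Covr :: "'a set \<Rightarrow> ('a \<Rightarrow> 'a \<Rightarrow> real) \<Rightarrow> 'a set \<Rightarrow> ereal" where
  "Covr X b D = Inf (ereal ` {R. 0 < R \<and> (\<Union>p\<in>D. gball X b p R) = X})"

definition voronoi_decomposition ::
  "'a set \<Rightarrow> ('a \<Rightarrow> 'a \<Rightarrow> real) \<Rightarrow> 'a set \<Rightarrow> ('a \<Rightarrow> 'a set) \<Rightarrow> bool" where
  "voronoi_decomposition X b D V \<longleftrightarrow>
     (\<forall>p\<in>D. \<forall>q\<in>D. p \<noteq> q \<longrightarrow> V p \<inter> V q = {}) \<and>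
     (\<forall>p\<in>D. p \<in> V p \<and>
        (\<forall>x\<in>V p. \<exists>\<gamma>. is_path X b \<gamma> p x \<and> set \<gamma> \<subseteq> V p \<and> path_length b \<gamma> = gdist X b p x)) \<and>
     (\<forall>p\<in>D. \<forall>x\<in>V p. \<forall>q\<in>D. gdist X b p x \<le> gdist X b q x) \<and>
     (\<Union>p\<in>D. V p) = X"

end

theory Submission
  imports Defs
begin

text \<open>Conditions (B) and (M) bound all edge weights by some \<open>K\<close>, and summability leaves every
  vertex with only finitely many edges of weight at least \<open>e > 0\<close>. A path of length at most \<open>r\<close>
  therefore has at most \<open>1 + K r\<close> vertices and uses only edges of weight at least \<open>1 / r\<close>, so
  there are finitely many of them: distances are attained by geodesics and balls are finite.
  The cell of a centre \<open>p\<close> consists of the points to which \<open>p\<close> is nearest, ties being broken by an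
  enumeration of \<open>D\<close>. Finiteness of balls provides a nearest centre for every point, and a point
  \<open>z\<close> on a geodesic from \<open>p\<close> to \<open>x\<close> stays in the cell of \<open>p\<close>: a centre beating \<open>p\<close> at \<open>z\<close>
  would beat it at \<open>x\<close> by the triangle inequality through \<open>z\<close>. The bound by the covering radius
  only uses that every point is at distance at most \<open>R\<close> from some centre, hence from its own.\<close>

lemma path_length_Nil [simp]: "path_length b [] = 0"
  and path_length_singleton [simp]: "path_length b [x] = 0"
  by (simp_all add: path_length_def)

lemma path_length_Cons_Cons [simp]:
  "path_length b (x # y # ys) = 1 / b x y + path_length b (y # ys)"
  unfolding path_length_def by (simp add: sum.lessThan_Suc_shift del: sum.lessThan_Suc)

lemma path_length_append:
  "path_length b (xs @ y # ys) = path_length b (xs @ [y]) + path_length b (y # ys)"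
  by (induction xs rule: induct_list012) auto

lemma path_length_rev:
  assumes "\<And>u v. u \<in> set \<gamma> \<Longrightarrow> v \<in> set \<gamma> \<Longrightarrow> b u v = b v u"
  shows "path_length b (rev \<gamma>) = path_length b \<gamma>"
  using assms
proof (induction \<gamma> rule: induct_list012)
  case (3 x y zs)
  have "path_length b (rev (x # y # zs)) = path_length b (rev (y # zs)) + 1 / b y x"
    using path_length_append[of b "rev zs" y "[x]"] by simp
  with 3 show ?case by simp
qed auto

lemma path_length_nonneg:
  "successively (\<lambda>u v. 0 < b u v) \<gamma> \<Longrightarrow> 0 \<le> path_length b \<gamma>"
  by (induction \<gamma> rule: induct_list012) auto

lemma edge_inverse_weight_le_path_length:
  "successively (\<lambda>u v. 0 < b u v) \<gamma> \<Longrightarrow> successively (\<lambda>u v. 1 / b u v \<le> path_length b \<gamma>) \<gamma>"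
proof (induction \<gamma> rule: induct_list012)
  case (3 x y zs)
  then have "0 \<le> path_length b (y # zs)" "0 < b x y"
    by (auto intro: path_length_nonneg)
  then have tail: "path_length b (y # zs) \<le> path_length b (x # y # zs)"
    and head: "1 / b x y \<le> path_length b (x # y # zs)"
    by simp_all
  have "successively (\<lambda>u v. 1 / b u v \<le> path_length b (y # zs)) (y # zs)"
    using 3 by simp
  then have "successively (\<lambda>u v. 1 / b u v \<le> path_length b (x # y # zs)) (y # zs)"
    by (rule successively_mono) (use tail in linarith)
  with head show ?case
    by (simp only: successively.simps)
qed auto

lemma length_le_path_length:
  assumes "\<And>u v. u \<in> set \<gamma> \<Longrightarrow> v \<in> set \<gamma> \<Longrightarrow> b u v \<le> K"
    and "successively (\<lambda>u v. 0 < b u v) \<gamma>"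
  shows "real (length \<gamma>) - 1 \<le> K * path_length b \<gamma>"
  using assms
proof (induction \<gamma> rule: induct_list012)
  case (3 x y zs)
  then have "1 \<le> K * (1 / b x y)"
    by (simp add: field_simps)
  moreover have "real (length (y # zs)) - 1 \<le> K * path_length b (y # zs)"
    using 3 by simp
  ultimately show ?case
    by (simp add: distrib_left)
qed auto

lemma is_path_iff:
  "is_path X b \<gamma> x y \<longleftrightarrow>
     \<gamma> \<noteq> [] \<and> hd \<gamma> = x \<and> last \<gamma> = y \<and> set \<gamma> \<subseteq> X \<and> successively (\<lambda>u v. 0 < b u v) \<gamma>"
  unfolding is_path_def successively_conv_nth ..

lemma is_path_append_iff:
  "is_path X b (xs @ z # ys) x y \<longleftrightarrow> is_path X b (xs @ [z]) x z \<and> is_path X b (z # ys) z y"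
  unfolding is_path_iff successively_append_iff by (cases xs) auto

lemma is_path_rev:
  assumes "\<And>u v. u \<in> X \<Longrightarrow> v \<in> X \<Longrightarrow> b u v = b v u" and "is_path X b \<gamma> x y"
  shows "is_path X b (rev \<gamma>) y x" and "path_length b (rev \<gamma>) = path_length b \<gamma>"
proof -
  have "set \<gamma> \<subseteq> X"
    using assms(2) by (simp add: is_path_iff)
  with assms show "is_path X b (rev \<gamma>) y x"
    by (auto simp: is_path_iff hd_rev last_rev subset_iff elim!: successively_mono)
  from \<open>set \<gamma> \<subseteq> X\<close> show "path_length b (rev \<gamma>) = path_length b \<gamma>"
    by (intro path_length_rev) (auto intro: assms(1))
qed

lemma is_path_length_nonneg: "is_path X b \<gamma> x y \<Longrightarrow> 0 \<le> path_length b \<gamma>"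
  by (simp add: is_path_iff path_length_nonneg)

lemma gdist_le_path_length: "is_path X b \<gamma> x y \<Longrightarrow> gdist X b x y \<le> path_length b \<gamma>"
  unfolding gdist_def
  by (rule cInf_lower) (auto intro!: bdd_belowI[of _ 0] is_path_length_nonneg)

lemma finite_chains_from:
  assumes "\<And>u. finite {v. R u v}"
  shows "finite {\<gamma>. \<gamma> \<noteq> [] \<and> hd \<gamma> = x \<and> length \<gamma> \<le> n \<and> successively R \<gamma>}"
proof (induction n arbitrary: x)
  case (Suc n)
  have "{\<gamma>. \<gamma> \<noteq> [] \<and> hd \<gamma> = x \<and> length \<gamma> \<le> Suc n \<and> successively R \<gamma>} \<subseteq>
        insert [x] (\<Union>y\<in>{v. R x v}. Cons x ` {\<gamma>. \<gamma> \<noteq> [] \<and> hd \<gamma> = y \<and> length \<gamma> \<le> n \<and> successively R \<gamma>})"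
    by (auto simp: successively_Cons neq_Nil_conv)
  moreover have "finite \<dots>"
    using assms Suc.IH by blast
  ultimately show ?case
    by (rule finite_subset)
qed simp

locale bounded_locally_finite_graph =
  fixes X :: "'a set" and b :: "'a \<Rightarrow> 'a \<Rightarrow> real" and K :: real
  assumes weight_sym: "\<And>x y. x \<in> X \<Longrightarrow> y \<in> X \<Longrightarrow> b x y = b y x"
    and weight_bounded: "\<And>x y. x \<in> X \<Longrightarrow> y \<in> X \<Longrightarrow> b x y \<le> K"
    and bound_nonneg: "0 \<le> K"
    and finite_heavy_edges: "\<And>x e. x \<in> X \<Longrightarrow> 0 < e \<Longrightarrow> finite {y \<in> X. e \<le> b x y}"
    and connected: "graph_connected X b"
begin

lemma is_path_length_le:
  assumes "is_path X b \<gamma> x y"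
  shows "real (length \<gamma>) - 1 \<le> K * path_length b \<gamma>"
  using assms by (intro length_le_path_length) (auto simp: is_path_iff subset_iff weight_bounded)

lemma finite_bounded_paths_from:
  assumes "x \<in> X" and "0 < r"
  shows "finite {\<gamma>. \<exists>y. is_path X b \<gamma> x y \<and> path_length b \<gamma> \<le> r}"
proof -
  define R where "R u v \<longleftrightarrow> u \<in> X \<and> v \<in> X \<and> 1 / r \<le> b u v" for u v
  define n where "n = Suc (nat \<lceil>K * r\<rceil>)"
  have "{\<gamma>. \<exists>y. is_path X b \<gamma> x y \<and> path_length b \<gamma> \<le> r} \<subseteq>
        {\<gamma>. \<gamma> \<noteq> [] \<and> hd \<gamma> = x \<and> length \<gamma> \<le> n \<and> successively R \<gamma>}"
  proof (clarify)
    fix \<gamma> y assume \<gamma>: "is_path X b \<gamma> x y" and len: "path_length b \<gamma> \<le> r"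
    have "real (length \<gamma>) - 1 \<le> K * r"
      using is_path_length_le[OF \<gamma>] len bound_nonneg
      by (meson mult_left_mono order_trans)
    then have "length \<gamma> \<le> n"
      unfolding n_def by linarith
    have pos: "successively (\<lambda>u v. 0 < b u v) \<gamma>" and sub: "set \<gamma> \<subseteq> X"
      using \<gamma> by (simp_all add: is_path_iff)
    have "successively (\<lambda>u v. 0 < b u v \<and> 1 / b u v \<le> path_length b \<gamma>) \<gamma>"
      using pos edge_inverse_weight_le_path_length[OF pos]
      by (simp add: successively_conv_nth)
    then have "successively R \<gamma>"
    proof (rule successively_mono)
      fix u v assume "u \<in> set \<gamma>" "v \<in> set \<gamma>" and uv: "0 < b u v \<and> 1 / b u v \<le> path_length b \<gamma>"
      then have "1 / b u v \<le> r"
        using len by linarith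
      with uv \<open>0 < r\<close> have "1 / r \<le> b u v"
        by (simp add: field_simps)
      with \<open>u \<in> set \<gamma>\<close> \<open>v \<in> set \<gamma>\<close> sub show "R u v"
        unfolding R_def by blast
    qed
    with \<gamma> \<open>length \<gamma> \<le> n\<close> show "\<gamma> \<noteq> [] \<and> hd \<gamma> = x \<and> length \<gamma> \<le> n \<and> successively R \<gamma>"
      by (simp add: is_path_iff)
  qed
  moreover have "finite {v. R u v}" for u
    using finite_heavy_edges[of u "1 / r"] \<open>0 < r\<close> unfolding R_def by (cases "u \<in> X") auto
  then have "finite {\<gamma>. \<gamma> \<noteq> [] \<and> hd \<gamma> = x \<and> length \<gamma> \<le> n \<and> successively R \<gamma>}"
    by (rule finite_chains_from)
  ultimately show ?thesis
    by (rule finite_subset)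
qed

lemma geodesic_exists:
  assumes "x \<in> X" and "y \<in> X"
  obtains \<gamma> where "is_path X b \<gamma> x y" and "path_length b \<gamma> = gdist X b x y"
proof -
  obtain \<gamma>\<^sub>0 where \<gamma>\<^sub>0: "is_path X b \<gamma>\<^sub>0 x y"
    using connected assms unfolding graph_connected_def by blast
  define L where "L = path_length b \<gamma>\<^sub>0 + 1"
  define P where "P = {\<gamma>. is_path X b \<gamma> x y \<and> path_length b \<gamma> \<le> L}"
  have "0 < L"
    using is_path_length_nonneg[OF \<gamma>\<^sub>0] unfolding L_def by simp
  moreover have "P \<subseteq> {\<gamma>. \<exists>y. is_path X b \<gamma> x y \<and> path_length b \<gamma> \<le> L}"
    unfolding P_def by blast
  ultimately have "finite P"
    using finite_bounded_paths_from[OF \<open>x \<in> X\<close>] finite_subset by blast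
  moreover have "\<gamma>\<^sub>0 \<in> P"
    unfolding P_def L_def using \<gamma>\<^sub>0 by simp
  ultimately obtain \<gamma> where "\<gamma> \<in> P" and \<gamma>_min: "\<And>\<delta>. \<delta> \<in> P \<Longrightarrow> path_length b \<gamma> \<le> path_length b \<delta>"
    using ex_is_arg_min_if_finite[of P "path_length b"] by (auto simp: is_arg_min_linorder)
  then have \<gamma>: "is_path X b \<gamma> x y"
    unfolding P_def by simp
  have "path_length b \<gamma> \<le> path_length b \<delta>" if "is_path X b \<delta> x y" for \<delta>
  proof (cases "\<delta> \<in> P")
    case False
    then have "path_length b \<gamma>\<^sub>0 < path_length b \<delta>"
      using that unfolding P_def L_def by auto
    with \<gamma>_min[OF \<open>\<gamma>\<^sub>0 \<in> P\<close>] show ?thesis by simp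
  qed (rule \<gamma>_min)
  then have "path_length b \<gamma> \<le> gdist X b x y"
    unfolding gdist_def using \<gamma> by (intro cInf_greatest) auto
  with gdist_le_path_length[OF \<gamma>] show thesis
    by (intro that[OF \<gamma>]) simp
qed

lemma gdist_nonneg:
  assumes "x \<in> X" "y \<in> X"
  shows "0 \<le> gdist X b x y"
proof -
  obtain \<gamma> where "is_path X b \<gamma> x y" "path_length b \<gamma> = gdist X b x y"
    using geodesic_exists assms .
  then show ?thesis
    using is_path_length_nonneg by metis
qed

lemma gdist_self [simp]: "x \<in> X \<Longrightarrow> gdist X b x x = 0"
proof -
  assume "x \<in> X"
  then have "gdist X b x x \<le> path_length b [x]"
    by (intro gdist_le_path_length) (simp add: is_path_iff)
  with gdist_nonneg[OF \<open>x \<in> X\<close> \<open>x \<in> X\<close>] show ?thesis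
    by simp
qed

lemma gdist_pos:
  assumes "x \<in> X" "y \<in> X" "x \<noteq> y"
  shows "0 < gdist X b x y"
proof -
  obtain \<gamma> where \<gamma>: "is_path X b \<gamma> x y" "path_length b \<gamma> = gdist X b x y"
    using geodesic_exists assms(1,2) .
  then have "2 \<le> length \<gamma>"
    using \<open>x \<noteq> y\<close> by (cases \<gamma> rule: remdups_adj.cases) (auto simp: is_path_iff)
  with is_path_length_le[OF \<gamma>(1)] have "1 \<le> K * path_length b \<gamma>"
    by linarith
  moreover have "0 \<le> path_length b \<gamma>"
    using \<gamma>(1) by (rule is_path_length_nonneg)
  ultimately have "0 < path_length b \<gamma>"
    by (cases "path_length b \<gamma> = 0") auto
  with \<gamma>(2) show ?thesis
    by simp
qed

lemma gdist_sym:
  assumes "x \<in> X" "y \<in> X"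
  shows "gdist X b x y = gdist X b y x"
proof -
  have le: "gdist X b v u \<le> gdist X b u v" if uv: "u \<in> X" "v \<in> X" for u v
  proof -
    obtain \<gamma> where \<gamma>: "is_path X b \<gamma> u v" "path_length b \<gamma> = gdist X b u v"
      using geodesic_exists uv .
    show ?thesis
      using gdist_le_path_length[OF is_path_rev(1)[OF weight_sym \<gamma>(1)]]
        is_path_rev(2)[OF weight_sym \<gamma>(1)] \<gamma>(2) by simp
  qed
  show ?thesis
    using le[OF assms] le[OF assms(2,1)] by simp
qed

lemma gdist_triangle:
  assumes "x \<in> X" "y \<in> X" "z \<in> X"
  shows "gdist X b x z \<le> gdist X b x y + gdist X b y z"
proof -
  obtain \<gamma>\<^sub>1 where \<gamma>\<^sub>1: "is_path X b \<gamma>\<^sub>1 x y" "path_length b \<gamma>\<^sub>1 = gdist X b x y"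
    using geodesic_exists assms(1,2) .
  obtain \<gamma>\<^sub>2 where \<gamma>\<^sub>2: "is_path X b \<gamma>\<^sub>2 y z" "path_length b \<gamma>\<^sub>2 = gdist X b y z"
    using geodesic_exists assms(2,3) .
  obtain xs where xs: "\<gamma>\<^sub>1 = xs @ [y]"
    using \<gamma>\<^sub>1(1) unfolding is_path_iff by (metis append_butlast_last_id)
  obtain ys where ys: "\<gamma>\<^sub>2 = y # ys"
    using \<gamma>\<^sub>2(1) unfolding is_path_iff by (metis list.collapse)
  have "is_path X b (xs @ y # ys) x z"
    using \<gamma>\<^sub>1(1) \<gamma>\<^sub>2(1) unfolding xs ys is_path_append_iff[of X b xs y ys] ..
  moreover have "path_length b (xs @ y # ys) = gdist X b x y + gdist X b y z"
    using \<gamma>\<^sub>1(2) \<gamma>\<^sub>2(2) unfolding xs ys path_length_append[of b xs y ys] by simp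
  ultimately show ?thesis
    using gdist_le_path_length by metis
qed

lemma gdist_on_geodesic:
  assumes "is_path X b \<gamma> x y" and "path_length b \<gamma> = gdist X b x y" and "z \<in> set \<gamma>"
  shows "gdist X b x z + gdist X b z y = gdist X b x y"
proof -
  obtain xs ys where split: "\<gamma> = xs @ z # ys"
    using split_list[OF assms(3)] by blast
  have "x \<in> X" "y \<in> X" "z \<in> X"
    using assms unfolding is_path_iff by auto
  from assms(1) have "is_path X b (xs @ [z]) x z" "is_path X b (z # ys) z y"
    unfolding split is_path_append_iff[of X b xs z ys] by simp_all
  then have "gdist X b x z + gdist X b z y \<le> path_length b \<gamma>"
    unfolding split path_length_append[of b xs z ys] by (intro add_mono gdist_le_path_length)
  with assms(2) gdist_triangle[OF \<open>x \<in> X\<close> \<open>z \<in> X\<close> \<open>y \<in> X\<close>] show ?thesis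
    by linarith
qed

lemma finite_gball: "x \<in> X \<Longrightarrow> finite (gball X b x r)"
proof -
  assume "x \<in> X"
  have "gball X b x r \<subseteq> last ` {\<gamma>. \<exists>y. is_path X b \<gamma> x y \<and> path_length b \<gamma> \<le> max r 0 + 1}"
  proof
    fix y assume "y \<in> gball X b x r"
    then have "y \<in> X" "gdist X b x y \<le> r"
      unfolding gball_def by simp_all
    obtain \<gamma> where \<gamma>: "is_path X b \<gamma> x y" "path_length b \<gamma> = gdist X b x y"
      using geodesic_exists[OF \<open>x \<in> X\<close> \<open>y \<in> X\<close>] .
    with \<open>gdist X b x y \<le> r\<close> have "path_length b \<gamma> \<le> max r 0 + 1"
      using max.cobounded1[of r 0] by linarith
    with \<gamma>(1) show "y \<in> last ` {\<gamma>. \<exists>y. is_path X b \<gamma> x y \<and> path_length b \<gamma> \<le> max r 0 + 1}"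
      by (auto simp: is_path_iff)
  qed
  moreover have "finite {\<gamma>. \<exists>y. is_path X b \<gamma> x y \<and> path_length b \<gamma> \<le> max r 0 + 1}"
    using \<open>x \<in> X\<close> by (intro finite_bounded_paths_from) auto
  ultimately show ?thesis
    by (meson finite_imageI finite_subset)
qed

end

definition voronoi_cell :: "'a set \<Rightarrow> ('a \<Rightarrow> 'a \<Rightarrow> real) \<Rightarrow> 'a set \<Rightarrow> ('a \<Rightarrow> nat) \<Rightarrow> 'a \<Rightarrow> 'a set" where
  "voronoi_cell X b D idx p =
     {x \<in> X. \<forall>q\<in>D. gdist X b p x < gdist X b q x \<or> (gdist X b p x = gdist X b q x \<and> idx p \<le> idx q)}"

lemma voronoi_cell_gdist_le:
  "x \<in> voronoi_cell X b D idx p \<Longrightarrow> q \<in> D \<Longrightarrow> gdist X b p x \<le> gdist X b q x"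
  unfolding voronoi_cell_def by fastforce

lemma voronoi_cells_disjoint:
  assumes "inj_on idx D" and "p \<in> D" "q \<in> D" "p \<noteq> q"
  shows "voronoi_cell X b D idx p \<inter> voronoi_cell X b D idx q = {}"
proof -
  have "idx p = idx q" if "x \<in> voronoi_cell X b D idx p" "x \<in> voronoi_cell X b D idx q" for x
    using that \<open>p \<in> D\<close> \<open>q \<in> D\<close> unfolding voronoi_cell_def by fastforce
  with assms show ?thesis
    by (auto dest: inj_onD)
qed

context bounded_locally_finite_graph
begin

lemma center_in_voronoi_cell:
  assumes "D \<subseteq> X" and "p \<in> D"
  shows "p \<in> voronoi_cell X b D idx p"
  using assms gdist_pos[of _ p] unfolding voronoi_cell_def by (fastforce simp: subset_iff)

lemma geodesic_in_voronoi_cell: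
  assumes "D \<subseteq> X" and x: "x \<in> voronoi_cell X b D idx p"
    and \<gamma>: "is_path X b \<gamma> p x" "path_length b \<gamma> = gdist X b p x"
  shows "set \<gamma> \<subseteq> voronoi_cell X b D idx p"
proof
  fix z assume "z \<in> set \<gamma>"
  then have split: "gdist X b p z + gdist X b z x = gdist X b p x"
    using gdist_on_geodesic[OF \<gamma>] by blast
  have "z \<in> X" "x \<in> X"
    using \<gamma>(1) \<open>z \<in> set \<gamma>\<close> unfolding is_path_iff by auto
  have "gdist X b p z < gdist X b q z \<or> (gdist X b p z = gdist X b q z \<and> idx p \<le> idx q)"
    if "q \<in> D" for q
  proof -
    have "gdist X b q x \<le> gdist X b q z + gdist X b z x"
      using gdist_triangle \<open>D \<subseteq> X\<close> \<open>q \<in> D\<close> \<open>z \<in> X\<close> \<open>x \<in> X\<close> by blast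
    moreover have "gdist X b p x < gdist X b q x \<or> (gdist X b p x = gdist X b q x \<and> idx p \<le> idx q)"
      using x \<open>q \<in> D\<close> unfolding voronoi_cell_def by blast
    ultimately show ?thesis
      using split by linarith
  qed
  with \<open>z \<in> X\<close> show "z \<in> voronoi_cell X b D idx p"
    unfolding voronoi_cell_def by blast
qed

lemma voronoi_cells_cover:
  assumes "D \<subseteq> X" and "D \<noteq> {}" and "x \<in> X"
  obtains p where "p \<in> D" and "x \<in> voronoi_cell X b D idx p"
proof -
  obtain p\<^sub>0 where "p\<^sub>0 \<in> D"
    using \<open>D \<noteq> {}\<close> by blast
  define C where "C = {q \<in> D. gdist X b q x \<le> gdist X b p\<^sub>0 x}"
  have "C \<subseteq> gball X b x (gdist X b p\<^sub>0 x)"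
    unfolding C_def gball_def using \<open>D \<subseteq> X\<close> \<open>x \<in> X\<close> gdist_sym by auto
  then have "finite C"
    using finite_gball[OF \<open>x \<in> X\<close>] finite_subset by blast
  moreover have "p\<^sub>0 \<in> C"
    unfolding C_def using \<open>p\<^sub>0 \<in> D\<close> by simp
  ultimately obtain q where "q \<in> C" and q_min: "\<And>q'. q' \<in> C \<Longrightarrow> gdist X b q x \<le> gdist X b q' x"
    using ex_is_arg_min_if_finite[of C "\<lambda>q. gdist X b q x"] by (auto simp: is_arg_min_linorder)
  have closest: "gdist X b q x \<le> gdist X b q' x" if "q' \<in> D" for q'
    using q_min[of q'] q_min[OF \<open>p\<^sub>0 \<in> C\<close>] that unfolding C_def by force
  obtain p where p: "p \<in> D \<and> gdist X b p x = gdist X b q x"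
    and p_least: "\<And>p'. p' \<in> D \<and> gdist X b p' x = gdist X b q x \<Longrightarrow> idx p \<le> idx p'"
    using ex_has_least_nat[of "\<lambda>p. p \<in> D \<and> gdist X b p x = gdist X b q x" q idx] \<open>q \<in> C\<close>
    unfolding C_def by auto
  have "x \<in> voronoi_cell X b D idx p"
    unfolding voronoi_cell_def using \<open>x \<in> X\<close> p p_least closest by fastforce
  with p that show thesis
    by blast
qed

lemma voronoi_decomposition_exists:
  assumes "D \<subseteq> X" and "D \<noteq> {}" and "countable D"
  shows "\<exists>V. voronoi_decomposition X b D V"
proof
  define V where "V = voronoi_cell X b D (to_nat_on D)"
  have "inj_on (to_nat_on D) D"
    using \<open>countable D\<close> by (rule inj_on_to_nat_on)
  then have disjoint: "V p \<inter> V q = {}" if "p \<in> D" "q \<in> D" "p \<noteq> q" for p q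
    unfolding V_def using that by (rule voronoi_cells_disjoint)
  have geodesic: "\<exists>\<gamma>. is_path X b \<gamma> p x \<and> set \<gamma> \<subseteq> V p \<and> path_length b \<gamma> = gdist X b p x"
    if "p \<in> D" and x: "x \<in> V p" for p x
  proof -
    have "p \<in> X" "x \<in> X"
      using \<open>p \<in> D\<close> \<open>D \<subseteq> X\<close> x unfolding V_def voronoi_cell_def by auto
    then obtain \<gamma> where "is_path X b \<gamma> p x" "path_length b \<gamma> = gdist X b p x"
      by (rule geodesic_exists)
    with geodesic_in_voronoi_cell[OF \<open>D \<subseteq> X\<close>] x show ?thesis
      unfolding V_def by blast
  qed
  have center: "p \<in> V p" if "p \<in> D" for p
    unfolding V_def using \<open>D \<subseteq> X\<close> that by (rule center_in_voronoi_cell)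
  have nearest: "gdist X b p x \<le> gdist X b q x" if "x \<in> V p" "q \<in> D" for p q x
    using that unfolding V_def by (rule voronoi_cell_gdist_le)
  have cover: "(\<Union>p\<in>D. V p) = X"
  proof
    show "X \<subseteq> (\<Union>p\<in>D. V p)"
      unfolding V_def by (auto elim: voronoi_cells_cover[OF assms(1,2)])
    show "(\<Union>p\<in>D. V p) \<subseteq> X"
      unfolding V_def voronoi_cell_def by blast
  qed
  show "voronoi_decomposition X b D V"
    unfolding voronoi_decomposition_def using disjoint geodesic center nearest cover by simp
qed

end

lemma voronoi_cell_subset_gball_Covr:
  assumes V: "voronoi_decomposition X b D V" and "Covr X b D \<noteq> \<infinity>" and "p \<in> D"
  shows "V p \<subseteq> gball X b p (real_of_ereal (Covr X b D))"
proof
  define S where "S = {R. 0 < R \<and> (\<Union>p\<in>D. gball X b p R) = X}"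
  have Covr_S: "Covr X b D = Inf (ereal ` S)"
    unfolding Covr_def S_def ..
  have "S \<noteq> {}"
  proof
    assume "S = {}"
    then have "Covr X b D = \<infinity>"
      unfolding Covr_S by (simp add: top_ereal_def)
    with \<open>Covr X b D \<noteq> \<infinity>\<close> show False ..
  qed
  moreover have "bdd_below S"
    unfolding S_def by (rule bdd_belowI[of _ 0]) auto
  ultimately have Covr_eq: "real_of_ereal (Covr X b D) = Inf S"
    using Covr_S ereal_Inf' by (metis real_of_ereal.simps(1))
  fix x assume x: "x \<in> V p"
  then have "x \<in> X"
    using V \<open>p \<in> D\<close> unfolding voronoi_decomposition_def by blast
  have "gdist X b p x \<le> Inf S"
  proof (rule cInf_greatest[OF \<open>S \<noteq> {}\<close>])
    fix R assume "R \<in> S"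
    then obtain q where "q \<in> D" "gdist X b q x \<le> R"
      using \<open>x \<in> X\<close> unfolding S_def gball_def by blast
    moreover have "gdist X b p x \<le> gdist X b q x"
      using V x \<open>p \<in> D\<close> \<open>q \<in> D\<close> unfolding voronoi_decomposition_def by blast
    ultimately show "gdist X b p x \<le> R"
      by simp
  qed
  with \<open>x \<in> X\<close> show "x \<in> gball X b p (real_of_ereal (Covr X b D))"
    unfolding gball_def Covr_eq by simp
qed

lemma weighted_graph_weight_le_infsum:
  assumes "weighted_graph X b m" and "x \<in> X" "y \<in> X"
  shows "b x y \<le> infsum (b x) X"
proof -
  have "sum (b x) {y} \<le> infsum (b x) X"
    using assms unfolding weighted_graph_def by (intro finite_sum_le_infsum) auto
  then show ?thesis
    by simp
qed

lemma weighted_graph_finite_heavy_edges: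
  assumes "weighted_graph X b m" and "x \<in> X" and "0 < e"
  shows "finite {y \<in> X. e \<le> b x y}"
proof (rule ccontr)
  assume "infinite {y \<in> X. e \<le> b x y}"
  obtain n :: nat where n: "infsum (b x) X / e < n"
    using reals_Archimedean2 by blast
  obtain F where F: "F \<subseteq> {y \<in> X. e \<le> b x y}" "finite F" "card F = n"
    using infinite_arbitrarily_large[OF \<open>infinite _\<close>] by blast
  have "real n * e \<le> sum (b x) F"
    using sum_bounded_below[of F e "b x"] F by auto
  also have "\<dots> \<le> infsum (b x) X"
    using assms F unfolding weighted_graph_def by (intro finite_sum_le_infsum) auto
  finally show False
    using n \<open>0 < e\<close> by (simp add: divide_less_eq)
qed

lemma weighted_graph_weights_bounded:
  assumes "weighted_graph X b m" and "cond_B X b m" and "cond_M X m"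
  obtains K where "0 \<le> K" and "\<And>x y. x \<in> X \<Longrightarrow> y \<in> X \<Longrightarrow> b x y \<le> K"
proof -
  obtain C where C: "\<And>x. x \<in> X \<Longrightarrow> infsum (b x) X / m x \<le> C"
    using \<open>cond_B X b m\<close> unfolding cond_B_def by blast
  obtain M where M: "\<And>x. x \<in> X \<Longrightarrow> m x \<le> M"
    using \<open>cond_M X m\<close> unfolding cond_M_def by blast
  have "b x y \<le> max C 0 * max M 0" if "x \<in> X" "y \<in> X" for x y
  proof -
    have "0 < m x"
      using \<open>weighted_graph X b m\<close> \<open>x \<in> X\<close> unfolding weighted_graph_def by blast
    have "b x y \<le> infsum (b x) X"
      using weighted_graph_weight_le_infsum assms(1) that .
    also have "\<dots> \<le> C * m x"
      using C[OF \<open>x \<in> X\<close>] \<open>0 < m x\<close> by (simp add: pos_divide_le_eq)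
    also have "\<dots> \<le> max C 0 * m x"
      using \<open>0 < m x\<close> by (intro mult_right_mono) auto
    also have "\<dots> \<le> max C 0 * max M 0"
      using M[OF \<open>x \<in> X\<close>] by (intro mult_left_mono) auto
    finally show ?thesis .
  qed
  then show thesis
    by (intro that[of "max C 0 * max M 0"]) auto
qed

theorem proposition3p8:
  fixes X :: "'a set" and b :: "'a \<Rightarrow> 'a \<Rightarrow> real" and m :: "'a \<Rightarrow> real" and D :: "'a set"
  assumes "weighted_graph X b m" and "cond_B X b m" and "cond_M X m"
    and "graph_connected X b" and "D \<subseteq> X" and "D \<noteq> {}"
  shows "(\<exists>V. voronoi_decomposition X b D V) \<and>
         (Covr X b D \<noteq> \<infinity> \<longrightarrow>
            (\<forall>V. voronoi_decomposition X b D V \<longrightarrow>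
               (\<forall>p\<in>D. V p \<subseteq> gball X b p (real_of_ereal (Covr X b D)))))"
proof
  obtain K where "0 \<le> K" and "\<And>x y. x \<in> X \<Longrightarrow> y \<in> X \<Longrightarrow> b x y \<le> K"
    using weighted_graph_weights_bounded[OF assms(1-3)] by blast
  moreover have "\<And>x y. x \<in> X \<Longrightarrow> y \<in> X \<Longrightarrow> b x y = b y x"
    using assms(1) unfolding weighted_graph_def by blast
  ultimately interpret bounded_locally_finite_graph X b K
    using weighted_graph_finite_heavy_edges[OF assms(1)] assms(4) by unfold_locales
  have "countable D"
    using countable_subset[OF assms(5)] assms(1) unfolding weighted_graph_def by blast
  then show "\<exists>V. voronoi_decomposition X b D V"
    by (rule voronoi_decomposition_exists[OF assms(5,6)])
qed (simp add: voronoi_cell_subset_gball_Covr)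

end
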